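(* Let $M\in\mathcal G$ and let $A\subseteq B\subseteq M$ be submodules. The following are equivalent: (a) $B$ is a strict subobject of $M$ and $A$ is a strict subobject of $B$; (b) $A$ is a strict subobject of $M$ and $B/A$ is a strict subobject of $M/A$; (c) $A$ and $B$ are both strict subobjects of $M$. (A quotient $B/A$ arising this way is called a strict subquotient of $M$.)
   Context: Let $\Lambda$ be a finite dimensional algebra over a field and $\mathrm{mod}\text-\Lambda$ the category of finitely generated right $\Lambda$-modules. Fix a torsion class $\mathcal G\subseteq\mathrm{mod}\text-\Lambda$, i.e. a class of modules closed under isomorphisms, extensions and quotients. For $B\in\mathcal G$, a subobject of $B$ is a submodule of $B$ that lies in $\mathcal G$. A subobject $A\subseteq B$ is a strict subobject if $A\cap B'\in\mathcal G$ for every subobject $B'$ of $B$. *)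

theory Defs
  imports Main
begin

definition fd_algebra :: "('k::field \<Rightarrow> 'a::ring_1) \<Rightarrow> bool" where
  "fd_algebra of_k \<longleftrightarrow>
     of_k 1 = 1 \<and>
     (\<forall>c d. of_k (c + d) = of_k c + of_k d) \<and>
     (\<forall>c d. of_k (c * d) = of_k c * of_k d) \<and>
     (\<forall>c x. of_k c * x = x * of_k c) \<and>
     (\<exists>S. finite S \<and> (\<forall>x. \<exists>c. x = (\<Sum>s\<in>S. of_k (c s) * s)))"

record ('a, 'v) rmod =
  mcarrier :: "'v set"
  madd :: "'v \<Rightarrow> 'v \<Rightarrow> 'v"
  mzero :: "'v"
  mact :: "'v \<Rightarrow> 'a \<Rightarrow> 'v"

definition rmodule :: "('a::ring_1, 'v) rmod \<Rightarrow> bool" where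
  "rmodule M \<longleftrightarrow>
     (let C = mcarrier M; p = madd M; z = mzero M; r = mact M in
       z \<in> C \<and>
       (\<forall>x\<in>C. \<forall>y\<in>C. p x y \<in> C) \<and>
       (\<forall>x\<in>C. \<forall>a. r x a \<in> C) \<and>
       (\<forall>x\<in>C. \<forall>y\<in>C. \<forall>w\<in>C. p (p x y) w = p x (p y w)) \<and>
       (\<forall>x\<in>C. \<forall>y\<in>C. p x y = p y x) \<and>
       (\<forall>x\<in>C. p z x = x) \<and>
       (\<forall>x\<in>C. \<exists>y\<in>C. p x y = z) \<and>
       (\<forall>x\<in>C. r x 1 = x) \<and>
       (\<forall>x\<in>C. \<forall>a b. r (r x a) b = r x (a * b)) \<and>
       (\<forall>x\<in>C. \<forall>y\<in>C. \<forall>a. r (p x y) a = p (r x a) (r y a)) \<and>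
       (\<forall>x\<in>C. \<forall>a b. r x (a + b) = p (r x a) (r x b)))"

definition sub_mod :: "('a::ring_1, 'v) rmod \<Rightarrow> 'v set \<Rightarrow> bool" where
  "sub_mod M S \<longleftrightarrow> rmodule M \<and> S \<subseteq> mcarrier M \<and> mzero M \<in> S \<and>
     (\<forall>x\<in>S. \<forall>y\<in>S. madd M x y \<in> S) \<and>
     (\<forall>x\<in>S. \<forall>a. mact M x a \<in> S) \<and>
     (\<forall>x\<in>S. \<exists>y\<in>S. madd M x y = mzero M)"

definition submod :: "('a, 'v) rmod \<Rightarrow> 'v set \<Rightarrow> ('a, 'v) rmod" where
  "submod M S = M\<lparr>mcarrier := S\<rparr>"

definition coset :: "('a, 'v) rmod \<Rightarrow> 'v set \<Rightarrow> 'v \<Rightarrow> 'v set" where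
  "coset M A x = {y \<in> mcarrier M. \<exists>a\<in>A. y = madd M x a}"

definition quot_mod :: "('a, 'v) rmod \<Rightarrow> 'v set \<Rightarrow> ('a, 'v set) rmod" where
  "quot_mod M A =
     \<lparr> mcarrier = coset M A ` mcarrier M,
       madd = (\<lambda>X Y. coset M A (madd M (SOME x. x \<in> X) (SOME y. y \<in> Y))),
       mzero = coset M A (mzero M),
       mact = (\<lambda>X a. coset M A (mact M (SOME x. x \<in> X) a)) \<rparr>"

definition hom_mod :: "('a, 'v) rmod \<Rightarrow> ('a, 'w) rmod \<Rightarrow> ('v \<Rightarrow> 'w) \<Rightarrow> bool" where
  "hom_mod M N f \<longleftrightarrow> f ` mcarrier M \<subseteq> mcarrier N \<and>
     (\<forall>x\<in>mcarrier M. \<forall>y\<in>mcarrier M. f (madd M x y) = madd N (f x) (f y)) \<and>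
     (\<forall>x\<in>mcarrier M. \<forall>a. f (mact M x a) = mact N (f x) a)"

definition iso_mod :: "('a, 'v) rmod \<Rightarrow> ('a, 'w) rmod \<Rightarrow> bool" where
  "iso_mod M N \<longleftrightarrow> (\<exists>f. hom_mod M N f \<and> bij_betw f (mcarrier M) (mcarrier N))"

definition fin_gen :: "('a::ring_1, 'v) rmod \<Rightarrow> bool" where
  "fin_gen M \<longleftrightarrow> (\<exists>S. finite S \<and> S \<subseteq> mcarrier M \<and>
     (\<forall>T. sub_mod M T \<and> S \<subseteq> T \<longrightarrow> T = mcarrier M))"

text \<open>A class of modules is represented by a predicate G on modules whose elements live in a
fixed universe type 'u.\<close>
definition inG :: "(('a::ring_1, 'u) rmod \<Rightarrow> bool) \<Rightarrow> ('a, 'w) rmod \<Rightarrow> bool" where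
  "inG G N \<longleftrightarrow> rmodule N \<and> (\<exists>N'. G N' \<and> iso_mod N N')"

definition short_exact ::
  "('a, 'v) rmod \<Rightarrow> ('a, 'v) rmod \<Rightarrow> ('a, 'v) rmod \<Rightarrow> ('v \<Rightarrow> 'v) \<Rightarrow> ('v \<Rightarrow> 'v) \<Rightarrow> bool" where
  "short_exact X Y Z f g \<longleftrightarrow> hom_mod X Y f \<and> inj_on f (mcarrier X) \<and>
     hom_mod Y Z g \<and> g ` mcarrier Y = mcarrier Z \<and>
     f ` mcarrier X = {y \<in> mcarrier Y. g y = mzero Z}"

definition torsion_class :: "(('a::ring_1, 'u) rmod \<Rightarrow> bool) \<Rightarrow> bool" where
  "torsion_class G \<longleftrightarrow>
     (\<forall>N. G N \<longrightarrow> rmodule N \<and> fin_gen N) \<and>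
     (\<forall>N N'. G N \<and> rmodule N' \<and> iso_mod N N' \<longrightarrow> G N') \<and>
     (\<forall>X Y Z f g. rmodule X \<and> rmodule Y \<and> rmodule Z \<and> short_exact X Y Z f g \<and> G X \<and> G Z
        \<longrightarrow> G Y) \<and>
     (\<forall>N K. G N \<and> sub_mod N K \<longrightarrow> inG G (quot_mod N K))"

definition subobj :: "(('a::ring_1, 'u) rmod \<Rightarrow> bool) \<Rightarrow> ('a, 'w) rmod \<Rightarrow> 'w set \<Rightarrow> bool" where
  "subobj G N S \<longleftrightarrow> sub_mod N S \<and> inG G (submod N S)"

definition strict_subobj ::
  "(('a::ring_1, 'u) rmod \<Rightarrow> bool) \<Rightarrow> ('a, 'w) rmod \<Rightarrow> 'w set \<Rightarrow> bool" where
  "strict_subobj G N S \<longleftrightarrow> subobj G N S \<and>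
     (\<forall>S'. subobj G N S' \<longrightarrow> inG G (submod N (S \<inter> S')))"

end

theory Submission
  imports Defs
begin

text \<open>
Two closure properties of the torsion class drive everything: images of members of G under
homomorphisms lie in G, and a submodule S of M lies in G as soon as A \<inter> S and the image of S
in M/A do, S being an extension of the latter by the former. Since A \<subseteq> B, the images of B and
of any submodule S in M/A meet exactly in the image of B \<inter> S. Tested against the image of a
subobject S' of M, strictness of B/A thus gives B \<inter> S' in G. Conversely, every subobject of M/A
is the image of its preimage in M, which lies in G as an extension by A, so strictness of B gives
strictness of B/A. The equivalence of (a) and (c) is bookkeeping: the subobjects of B are the
subobjects of M contained in B, and B \<inter> S' is one of them.
\<close>

context
  fixes M :: "('a::ring_1, 'v) rmod"
  assumes M: "rmodule M"
begin

lemma rmodule_zero_closed: "mzero M \<in> mcarrier M"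
  using M unfolding rmodule_def Let_def by (elim conjE) blast

lemma rmodule_add_closed: "x \<in> mcarrier M \<Longrightarrow> y \<in> mcarrier M \<Longrightarrow> madd M x y \<in> mcarrier M"
  using M unfolding rmodule_def Let_def by (elim conjE) blast

lemma rmodule_act_closed: "x \<in> mcarrier M \<Longrightarrow> mact M x a \<in> mcarrier M"
  using M unfolding rmodule_def Let_def by (elim conjE) blast

lemma rmodule_add_assoc:
  "x \<in> mcarrier M \<Longrightarrow> y \<in> mcarrier M \<Longrightarrow> z \<in> mcarrier M \<Longrightarrow>
    madd M (madd M x y) z = madd M x (madd M y z)"
  using M unfolding rmodule_def Let_def by (elim conjE) blast

lemma rmodule_add_commute: "x \<in> mcarrier M \<Longrightarrow> y \<in> mcarrier M \<Longrightarrow> madd M x y = madd M y x"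
  using M unfolding rmodule_def Let_def by (elim conjE) blast

lemma rmodule_add_zero_left: "x \<in> mcarrier M \<Longrightarrow> madd M (mzero M) x = x"
  using M unfolding rmodule_def Let_def by (elim conjE) blast

lemma rmodule_add_inverse: "x \<in> mcarrier M \<Longrightarrow> \<exists>y\<in>mcarrier M. madd M x y = mzero M"
  using M unfolding rmodule_def Let_def by (elim conjE) blast

lemma rmodule_act_one: "x \<in> mcarrier M \<Longrightarrow> mact M x 1 = x"
  using M unfolding rmodule_def Let_def by (elim conjE) blast

lemma rmodule_act_act: "x \<in> mcarrier M \<Longrightarrow> mact M (mact M x a) b = mact M x (a * b)"
  using M unfolding rmodule_def Let_def by (elim conjE) blast

lemma rmodule_act_add_distrib:
  "x \<in> mcarrier M \<Longrightarrow> y \<in> mcarrier M \<Longrightarrow> mact M (madd M x y) a = madd M (mact M x a) (mact M y a)"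
  using M unfolding rmodule_def Let_def by (elim conjE) blast

lemma rmodule_act_scalar_add: "x \<in> mcarrier M \<Longrightarrow> mact M x (a + b) = madd M (mact M x a) (mact M x b)"
  using M by (simp add: rmodule_def Let_def)

lemma rmodule_add_zero_right: "x \<in> mcarrier M \<Longrightarrow> madd M x (mzero M) = x"
  by (metis rmodule_add_commute rmodule_add_zero_left rmodule_zero_closed)

lemma rmodule_add_left_cancel:
  assumes x: "x \<in> mcarrier M" and y: "y \<in> mcarrier M" and z: "z \<in> mcarrier M"
    and eq: "madd M x y = madd M x z"
  shows "y = z"
proof -
  obtain n where n: "n \<in> mcarrier M" "madd M n x = mzero M"
    using rmodule_add_inverse[OF x] rmodule_add_commute x by metis
  have "y = madd M (madd M n x) y" using n y rmodule_add_zero_left by simp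
  also have "\<dots> = madd M n (madd M x z)" using rmodule_add_assoc[OF n(1) x y] eq by simp
  also have "\<dots> = madd M (madd M n x) z" using rmodule_add_assoc[OF n(1) x z] by simp
  also have "\<dots> = z" using n z rmodule_add_zero_left by simp
  finally show ?thesis .
qed

lemma rmodule_add_idem_imp_zero: "x \<in> mcarrier M \<Longrightarrow> madd M x x = x \<Longrightarrow> x = mzero M"
  by (metis rmodule_add_left_cancel rmodule_add_zero_right rmodule_zero_closed)

lemma rmodule_act_zero: "mact M (mzero M) a = mzero M"
  using rmodule_act_add_distrib[OF rmodule_zero_closed rmodule_zero_closed, of a]
  by (simp add: rmodule_add_idem_imp_zero rmodule_act_closed rmodule_add_zero_left
      rmodule_zero_closed)

lemma rmodule_act_scalar_zero: "x \<in> mcarrier M \<Longrightarrow> mact M x 0 = mzero M"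
  using rmodule_act_scalar_add[of x 0 0] by (simp add: rmodule_act_closed rmodule_add_idem_imp_zero)

lemma rmodule_add_act_neg_one: "x \<in> mcarrier M \<Longrightarrow> madd M x (mact M x (-1)) = mzero M"
  using rmodule_act_scalar_add[of x 1 "-1"] by (simp add: rmodule_act_one rmodule_act_scalar_zero)

lemma rmodule_add_left_commute:
  "x \<in> mcarrier M \<Longrightarrow> y \<in> mcarrier M \<Longrightarrow> z \<in> mcarrier M \<Longrightarrow>
    madd M x (madd M y z) = madd M y (madd M x z)"
  by (metis rmodule_add_assoc rmodule_add_commute)

lemma rmodule_add_add_swap:
  "w \<in> mcarrier M \<Longrightarrow> x \<in> mcarrier M \<Longrightarrow> y \<in> mcarrier M \<Longrightarrow> z \<in> mcarrier M \<Longrightarrow>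
    madd M (madd M w x) (madd M y z) = madd M (madd M w y) (madd M x z)"
  by (simp add: rmodule_add_assoc rmodule_add_closed rmodule_add_left_commute)

lemma rmodule_add_neg_cancel_left:
  "x \<in> mcarrier M \<Longrightarrow> y \<in> mcarrier M \<Longrightarrow> madd M y (madd M x (mact M y (-1))) = x"
  by (simp add: rmodule_act_closed rmodule_add_act_neg_one rmodule_add_left_commute
      rmodule_add_zero_right)

lemma rmodule_add_neg_cancel_right:
  "x \<in> mcarrier M \<Longrightarrow> y \<in> mcarrier M \<Longrightarrow> madd M (madd M x y) (mact M y (-1)) = x"
  by (simp add: rmodule_act_closed rmodule_add_act_neg_one rmodule_add_assoc rmodule_add_zero_right)

end

lemma submod_simps [simp]:
  "mcarrier (submod M S) = S" "madd (submod M S) = madd M"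
  "mzero (submod M S) = mzero M" "mact (submod M S) = mact M"
  by (simp_all add: submod_def)

lemma submod_submod [simp]: "submod (submod M B) S = submod M S"
  by (simp add: submod_def)

lemma sub_modD:
  assumes "sub_mod M S"
  shows "rmodule M" "S \<subseteq> mcarrier M" "mzero M \<in> S"
    "\<And>x y. x \<in> S \<Longrightarrow> y \<in> S \<Longrightarrow> madd M x y \<in> S" "\<And>x a. x \<in> S \<Longrightarrow> mact M x a \<in> S"
  using assms unfolding sub_mod_def by blast+

lemma sub_modI:
  assumes M: "rmodule M" and "S \<subseteq> mcarrier M" and "mzero M \<in> S"
    and "\<And>x y. x \<in> S \<Longrightarrow> y \<in> S \<Longrightarrow> madd M x y \<in> S"
    and act: "\<And>x a. x \<in> S \<Longrightarrow> mact M x a \<in> S"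
  shows "sub_mod M S"
  unfolding sub_mod_def
proof (intro conjI ballI allI assms)
  fix x assume "x \<in> S"
  then show "\<exists>y\<in>S. madd M x y = mzero M"
    using act[of x "-1"] rmodule_add_act_neg_one[OF M] assms(2) by blast
qed

lemma rmodule_submod:
  assumes S: "sub_mod M S"
  shows "rmodule (submod M S)"
proof -
  have M: "rmodule M" and sub: "\<And>x. x \<in> S \<Longrightarrow> x \<in> mcarrier M"
    using sub_modD[OF S] by blast+
  show ?thesis
    unfolding rmodule_def Let_def submod_simps
  proof (intro conjI ballI allI)
    fix x y z a b assume x: "x \<in> S" and y: "y \<in> S" and z: "z \<in> S"
    show "madd M (madd M x y) z = madd M x (madd M y z)"
      by (rule rmodule_add_assoc[OF M sub[OF x] sub[OF y] sub[OF z]])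
    show "madd M x y = madd M y x" by (rule rmodule_add_commute[OF M sub[OF x] sub[OF y]])
    show "mact M (madd M x y) a = madd M (mact M x a) (mact M y a)"
      by (rule rmodule_act_add_distrib[OF M sub[OF x] sub[OF y]])
  next
    fix x a b assume x: "x \<in> S"
    show "madd M (mzero M) x = x" by (rule rmodule_add_zero_left[OF M sub[OF x]])
    show "mact M x 1 = x" by (rule rmodule_act_one[OF M sub[OF x]])
    show "mact M (mact M x a) b = mact M x (a * b)" by (rule rmodule_act_act[OF M sub[OF x]])
    show "mact M x (a + b) = madd M (mact M x a) (mact M x b)"
      by (rule rmodule_act_scalar_add[OF M sub[OF x]])
    show "\<exists>y\<in>S. madd M x y = mzero M" using S x unfolding sub_mod_def by blast
  qed (use sub_modD[OF S] in blast)+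
qed

lemma sub_mod_submod_iff:
  assumes B: "sub_mod M B"
  shows "sub_mod (submod M B) S \<longleftrightarrow> sub_mod M S \<and> S \<subseteq> B"
proof
  assume "sub_mod (submod M B) S"
  note S = sub_modD[OF this, unfolded submod_simps]
  have "sub_mod M S"
  proof (rule sub_modI[OF sub_modD(1)[OF B]])
    show "S \<subseteq> mcarrier M" using S(2) sub_modD(2)[OF B] by (rule order_trans)
  qed (fact S)+
  with S(2) show "sub_mod M S \<and> S \<subseteq> B" by blast
next
  assume "sub_mod M S \<and> S \<subseteq> B"
  then have S: "sub_mod M S" and SB: "S \<subseteq> B" by auto
  show "sub_mod (submod M B) S"
    by (rule sub_modI[OF rmodule_submod[OF B]]) (simp_all add: SB sub_modD[OF S])
qed

lemma sub_mod_Int: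
  assumes S: "sub_mod M S" and T: "sub_mod M T"
  shows "sub_mod M (S \<inter> T)"
  using sub_modD[OF S] sub_modD[OF T] by (intro sub_modI) auto

lemma sub_mod_zero: "rmodule M \<Longrightarrow> sub_mod M {mzero M}"
  by (intro sub_modI) (simp_all add: rmodule_zero_closed rmodule_add_zero_left rmodule_act_zero)

lemma hom_modD:
  assumes "hom_mod M N f"
  shows "\<And>x. x \<in> mcarrier M \<Longrightarrow> f x \<in> mcarrier N"
    "\<And>x y. x \<in> mcarrier M \<Longrightarrow> y \<in> mcarrier M \<Longrightarrow> f (madd M x y) = madd N (f x) (f y)"
    "\<And>x a. x \<in> mcarrier M \<Longrightarrow> f (mact M x a) = mact N (f x) a"
  using assms unfolding hom_mod_def by blast+

lemma hom_mod_zero: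
  assumes M: "rmodule M" and N: "rmodule N" and f: "hom_mod M N f"
  shows "f (mzero M) = mzero N"
proof (rule rmodule_add_idem_imp_zero[OF N])
  have z: "mzero M \<in> mcarrier M" by (rule rmodule_zero_closed[OF M])
  show "f (mzero M) \<in> mcarrier N" by (rule hom_modD(1)[OF f z])
  show "madd N (f (mzero M)) (f (mzero M)) = f (mzero M)"
    using hom_modD(2)[OF f z z] rmodule_add_zero_left[OF M z] by simp
qed

lemma hom_mod_comp: "hom_mod M N f \<Longrightarrow> hom_mod N P g \<Longrightarrow> hom_mod M P (g \<circ> f)"
  unfolding hom_mod_def by (auto simp: image_subset_iff)

lemma hom_mod_restrict:
  "hom_mod M N f \<Longrightarrow> S \<subseteq> mcarrier M \<Longrightarrow> f ` S \<subseteq> T \<Longrightarrow> hom_mod (submod M S) (submod N T) f"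
  unfolding hom_mod_def submod_simps by blast

lemma hom_mod_inv_into:
  assumes M: "rmodule M" and f: "hom_mod M N f" and bij: "bij_betw f (mcarrier M) (mcarrier N)"
  shows "hom_mod N M (inv_into (mcarrier M) f)"
proof -
  let ?g = "inv_into (mcarrier M) f"
  have g: "?g y \<in> mcarrier M" "f (?g y) = y" if "y \<in> mcarrier N" for y
    using that bij by (auto simp: bij_betw_def inv_into_into f_inv_into_f)
  have g_f: "?g (f x) = x" if "x \<in> mcarrier M" for x
    using that bij by (simp add: bij_betw_def)
  show ?thesis
    unfolding hom_mod_def
  proof (intro conjI ballI allI)
    show "?g ` mcarrier N \<subseteq> mcarrier M" using g by blast
    fix x y a assume x: "x \<in> mcarrier N" and y: "y \<in> mcarrier N"
    have "?g (madd N x y) = ?g (f (madd M (?g x) (?g y)))"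
      using hom_modD(2)[OF f g(1)[OF x] g(1)[OF y]] by (simp only: g(2) x y)
    also have "\<dots> = madd M (?g x) (?g y)"
      by (rule g_f[OF rmodule_add_closed[OF M g(1)[OF x] g(1)[OF y]]])
    finally show "?g (madd N x y) = madd M (?g x) (?g y)" .
    have "?g (mact N x a) = ?g (f (mact M (?g x) a))"
      using hom_modD(3)[OF f g(1)[OF x]] by (simp only: g(2) x)
    also have "\<dots> = mact M (?g x) a"
      by (rule g_f[OF rmodule_act_closed[OF M g(1)[OF x]]])
    finally show "?g (mact N x a) = mact M (?g x) a" .
  qed
qed

lemma iso_mod_refl: "iso_mod M M"
  unfolding iso_mod_def hom_mod_def by (rule exI[of _ id]) auto

lemma iso_mod_sym: "rmodule M \<Longrightarrow> iso_mod M N \<Longrightarrow> iso_mod N M"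
  unfolding iso_mod_def by (metis bij_betw_inv_into hom_mod_inv_into)

lemma iso_mod_trans: "iso_mod M N \<Longrightarrow> iso_mod N P \<Longrightarrow> iso_mod M P"
  unfolding iso_mod_def by (metis bij_betw_trans hom_mod_comp)

definition hom_kernel :: "('a, 'v) rmod \<Rightarrow> ('a, 'w) rmod \<Rightarrow> ('v \<Rightarrow> 'w) \<Rightarrow> 'v set" where
  "hom_kernel M N f = {x \<in> mcarrier M. f x = mzero N}"

context
  fixes M :: "('a::ring_1, 'v) rmod" and N :: "('a, 'w) rmod" and f :: "'v \<Rightarrow> 'w"
  assumes M: "rmodule M" and N: "rmodule N" and f: "hom_mod M N f"
begin

lemma sub_mod_image:
  assumes S: "sub_mod M S"
  shows "sub_mod N (f ` S)"
proof (rule sub_modI[OF N])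
  note S = sub_modD[OF S]
  show "f ` S \<subseteq> mcarrier N" using S(2) hom_modD(1)[OF f] by blast
  show "mzero N \<in> f ` S" using S(3) hom_mod_zero[OF M N f] by force
  fix x y a assume "x \<in> f ` S" "y \<in> f ` S"
  then obtain u v where uv: "u \<in> S" "v \<in> S" and "x = f u" "y = f v" by blast
  moreover have "u \<in> mcarrier M" "v \<in> mcarrier M" using uv S(2) by blast+
  ultimately have "madd N x y = f (madd M u v)" "mact N x a = f (mact M u a)"
    using hom_modD(2,3)[OF f] by simp_all
  then show "madd N x y \<in> f ` S" "mact N x a \<in> f ` S" using uv S(4,5) by simp_all
qed

lemma sub_mod_vimage:
  assumes T: "sub_mod N T"
  shows "sub_mod M {x \<in> mcarrier M. f x \<in> T}"
proof (rule sub_modI[OF M])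
  note T = sub_modD[OF T]
  show "mzero M \<in> {x \<in> mcarrier M. f x \<in> T}"
    using rmodule_zero_closed[OF M] hom_mod_zero[OF M N f] T(3) by simp
  fix x y a assume x: "x \<in> {x \<in> mcarrier M. f x \<in> T}" and "y \<in> {x \<in> mcarrier M. f x \<in> T}"
  then show "madd M x y \<in> {x \<in> mcarrier M. f x \<in> T}" "mact M x a \<in> {x \<in> mcarrier M. f x \<in> T}"
    using T(4,5) hom_modD(2,3)[OF f] rmodule_add_closed[OF M] rmodule_act_closed[OF M] by simp_all
qed blast

lemma sub_mod_hom_kernel: "sub_mod M (hom_kernel M N f)"
  unfolding hom_kernel_def using sub_mod_vimage[OF sub_mod_zero[OF N]] by simp

end

section \<open>Quotient modules\<close>

lemma rmodule_surj_image:
  assumes M: "rmodule M" and surj: "f ` mcarrier M = mcarrier N"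
    and add: "\<And>x y. x \<in> mcarrier M \<Longrightarrow> y \<in> mcarrier M \<Longrightarrow> madd N (f x) (f y) = f (madd M x y)"
    and act: "\<And>x a. x \<in> mcarrier M \<Longrightarrow> mact N (f x) a = f (mact M x a)"
    and zero: "mzero N = f (mzero M)"
  shows "rmodule N"
  unfolding rmodule_def Let_def surj[symmetric] ball_simps bex_simps zero
proof (intro conjI ballI allI)
  fix x assume x: "x \<in> mcarrier M"
  show "\<exists>y\<in>mcarrier M. madd N (f x) (f y) = f (mzero M)"
    using x rmodule_add_act_neg_one[OF M x] rmodule_act_closed[OF M x] add by metis
  fix y assume y: "y \<in> mcarrier M"
  show "madd N (f x) (f y) = madd N (f y) (f x)" using add x y rmodule_add_commute[OF M x y] by simp
qed (simp_all add: add act rmodule_zero_closed[OF M] rmodule_add_closed[OF M]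
      rmodule_act_closed[OF M] rmodule_add_assoc[OF M] rmodule_add_zero_left[OF M] rmodule_act_one[OF M]
      rmodule_act_act[OF M] rmodule_act_add_distrib[OF M] rmodule_act_scalar_add[OF M])

lemma quot_mod_simps [simp]:
  "mcarrier (quot_mod M A) = coset M A ` mcarrier M"
  "mzero (quot_mod M A) = coset M A (mzero M)"
  by (simp_all add: quot_mod_def)

lemma coset_image_vimage:
  "sub_mod (quot_mod M A) S' \<Longrightarrow> coset M A ` {x \<in> mcarrier M. coset M A x \<in> S'} = S'"
  using sub_modD(2)[of "quot_mod M A" S'] by auto

context
  fixes M :: "('a::ring_1, 'v) rmod" and A :: "'v set"
  assumes A: "sub_mod M A"
begin

private lemma M: "rmodule M"
  by (rule sub_modD(1)[OF A])

private lemma A_carrier: "a \<in> A \<Longrightarrow> a \<in> mcarrier M"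
  using sub_modD(2)[OF A] by blast

lemma coset_self: "x \<in> mcarrier M \<Longrightarrow> x \<in> coset M A x"
  unfolding coset_def using sub_modD(3)[OF A] rmodule_add_zero_right[OF M] by force

lemma some_in_coset: "x \<in> mcarrier M \<Longrightarrow> (SOME z. z \<in> coset M A x) \<in> coset M A x"
  using coset_self by (rule someI)

lemma coset_subset:
  assumes y: "y \<in> mcarrier M" and a: "a \<in> A"
  shows "coset M A (madd M y a) \<subseteq> coset M A y"
proof
  fix z assume "z \<in> coset M A (madd M y a)"
  then obtain b where b: "z \<in> mcarrier M" "b \<in> A" "z = madd M (madd M y a) b"
    unfolding coset_def by blast
  then have "z = madd M y (madd M a b)"
    using rmodule_add_assoc[OF M y A_carrier[OF a] A_carrier[OF b(2)]] by simp
  then show "z \<in> coset M A y" unfolding coset_def using b(1) sub_modD(4)[OF A a b(2)] by blast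
qed

lemma coset_eq_iff:
  assumes x: "x \<in> mcarrier M" and y: "y \<in> mcarrier M"
  shows "coset M A x = coset M A y \<longleftrightarrow> (\<exists>a\<in>A. x = madd M y a)"
proof
  assume "coset M A x = coset M A y"
  then show "\<exists>a\<in>A. x = madd M y a" using coset_self[OF x] unfolding coset_def by blast
next
  assume "\<exists>a\<in>A. x = madd M y a"
  then obtain a where a: "a \<in> A" and x_eq: "x = madd M y a" by blast
  have "y = madd M x (mact M a (-1))"
    using rmodule_add_neg_cancel_right[OF M y A_carrier[OF a]] x_eq by simp
  then have "coset M A y \<subseteq> coset M A x" using coset_subset[OF x sub_modD(5)[OF A a]] by simp
  moreover have "coset M A x \<subseteq> coset M A y" using coset_subset[OF y a] x_eq by simp
  ultimately show "coset M A x = coset M A y" by blast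
qed

lemma coset_eq_zero_iff:
  assumes x: "x \<in> mcarrier M"
  shows "coset M A x = mzero (quot_mod M A) \<longleftrightarrow> x \<in> A"
  using coset_eq_iff[OF x rmodule_zero_closed[OF M]] rmodule_add_zero_left[OF M] A_carrier x
  by auto

lemma coset_eq_of_mem:
  assumes x: "x \<in> mcarrier M" and z: "z \<in> coset M A x"
  shows "coset M A z = coset M A x"
  using z coset_eq_iff[OF _ x] unfolding coset_def by blast

lemma quot_mod_add_coset:
  assumes x: "x \<in> mcarrier M" and y: "y \<in> mcarrier M"
  shows "madd (quot_mod M A) (coset M A x) (coset M A y) = coset M A (madd M x y)"
proof -
  obtain a where a: "a \<in> A" "(SOME z. z \<in> coset M A x) = madd M x a"
    using some_in_coset[OF x] unfolding coset_def by blast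
  obtain b where b: "b \<in> A" "(SOME z. z \<in> coset M A y) = madd M y b"
    using some_in_coset[OF y] unfolding coset_def by blast
  have "madd M (madd M x a) (madd M y b) = madd M (madd M x y) (madd M a b)"
    by (rule rmodule_add_add_swap[OF M x A_carrier[OF a(1)] y A_carrier[OF b(1)]])
  then have "coset M A (madd M (madd M x a) (madd M y b)) = coset M A (madd M x y)"
    using coset_eq_iff rmodule_add_closed[OF M] x y A_carrier a(1) b(1) sub_modD(4)[OF A a(1) b(1)]
    by metis
  then show ?thesis unfolding quot_mod_def using a b by simp
qed

lemma quot_mod_act_coset:
  assumes x: "x \<in> mcarrier M"
  shows "mact (quot_mod M A) (coset M A x) r = coset M A (mact M x r)"
proof -
  obtain a where a: "a \<in> A" "(SOME z. z \<in> coset M A x) = madd M x a"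
    using some_in_coset[OF x] unfolding coset_def by blast
  have "mact M (madd M x a) r = madd M (mact M x r) (mact M a r)"
    by (rule rmodule_act_add_distrib[OF M x A_carrier[OF a(1)]])
  then have "coset M A (mact M (madd M x a) r) = coset M A (mact M x r)"
    using coset_eq_iff rmodule_act_closed[OF M] rmodule_add_closed[OF M] x A_carrier a(1)
      sub_modD(5)[OF A a(1)]
    by metis
  then show ?thesis unfolding quot_mod_def using a by simp
qed

lemma hom_mod_coset: "hom_mod M (quot_mod M A) (coset M A)"
  unfolding hom_mod_def using quot_mod_add_coset quot_mod_act_coset by auto

lemma rmodule_quot_mod: "rmodule (quot_mod M A)"
  by (rule rmodule_surj_image[OF M, of "coset M A"])
     (simp_all add: quot_mod_add_coset quot_mod_act_coset)

lemma coset_image_Int: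
  assumes B: "sub_mod M B" and AB: "A \<subseteq> B" and S: "S \<subseteq> mcarrier M"
  shows "coset M A ` B \<inter> coset M A ` S = coset M A ` (B \<inter> S)"
proof
  show "coset M A ` B \<inter> coset M A ` S \<subseteq> coset M A ` (B \<inter> S)"
  proof
    fix X assume "X \<in> coset M A ` B \<inter> coset M A ` S"
    then obtain b s where bs: "b \<in> B" "s \<in> S" and X: "X = coset M A b" "X = coset M A s" by blast
    have b: "b \<in> mcarrier M" and s: "s \<in> mcarrier M" using bs S sub_modD(2)[OF B] by blast+
    obtain a where "a \<in> A" "s = madd M b a" using X coset_eq_iff[OF s b] by auto
    then have "s \<in> B" using sub_modD(4)[OF B bs(1)] AB by blast
    then show "X \<in> coset M A ` (B \<inter> S)" using bs(2) X(2) by blast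
  qed
qed blast

end

context
  fixes M :: "('a::ring_1, 'v) rmod" and N :: "('a, 'w) rmod" and f :: "'v \<Rightarrow> 'w"
  assumes M: "rmodule M" and N: "rmodule N" and f: "hom_mod M N f"
begin

lemma coset_hom_kernel_eq_iff:
  assumes x: "x \<in> mcarrier M" and y: "y \<in> mcarrier M"
  shows "coset M (hom_kernel M N f) x = coset M (hom_kernel M N f) y \<longleftrightarrow> f x = f y"
proof -
  let ?K = "hom_kernel M N f"
  have K: "sub_mod M ?K" by (rule sub_mod_hom_kernel[OF M N f])
  have "(\<exists>k\<in>?K. x = madd M y k) \<longleftrightarrow> f x = f y"
  proof
    assume "\<exists>k\<in>?K. x = madd M y k"
    then obtain k where "k \<in> mcarrier M" "f k = mzero N" "x = madd M y k"
      unfolding hom_kernel_def by blast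
    then show "f x = f y"
      using hom_modD(2)[OF f y] rmodule_add_zero_right[OF N hom_modD(1)[OF f y]] by simp
  next
    assume fxy: "f x = f y"
    let ?k = "madd M x (mact M y (-1))"
    have k: "?k \<in> mcarrier M"
      using rmodule_add_closed[OF M x rmodule_act_closed[OF M y]] .
    have "f ?k = madd N (f y) (mact N (f y) (-1))"
      using hom_modD(2)[OF f x rmodule_act_closed[OF M y]] hom_modD(3)[OF f y] fxy by simp
    then have "?k \<in> ?K"
      unfolding hom_kernel_def using k rmodule_add_act_neg_one[OF N hom_modD(1)[OF f y]] by simp
    moreover have "x = madd M y ?k" using rmodule_add_neg_cancel_left[OF M x y] by simp
    ultimately show "\<exists>k\<in>?K. x = madd M y k" by blast
  qed
  then show ?thesis using coset_eq_iff[OF K x y] by simp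
qed

lemma iso_mod_quot_hom_kernel:
  assumes surj: "f ` mcarrier M = mcarrier N"
  shows "iso_mod (quot_mod M (hom_kernel M N f)) N"
proof -
  let ?K = "hom_kernel M N f"
  have K: "sub_mod M ?K" by (rule sub_mod_hom_kernel[OF M N f])
  define \<phi> where "\<phi> X = f (SOME x. x \<in> X)" for X
  have \<phi>_coset: "\<phi> (coset M ?K x) = f x" if x: "x \<in> mcarrier M" for x
  proof -
    have z: "(SOME z. z \<in> coset M ?K x) \<in> coset M ?K x" by (rule some_in_coset[OF K x])
    then have "(SOME z. z \<in> coset M ?K x) \<in> mcarrier M" unfolding coset_def by blast
    then show ?thesis
      unfolding \<phi>_def using coset_eq_of_mem[OF K x z] coset_hom_kernel_eq_iff x by blast
  qed
  have "hom_mod (quot_mod M ?K) N \<phi>"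
    unfolding hom_mod_def quot_mod_simps ball_simps
    using \<phi>_coset hom_modD[OF f] quot_mod_add_coset[OF K] quot_mod_act_coset[OF K]
      rmodule_add_closed[OF M] rmodule_act_closed[OF M]
    by auto
  moreover have "inj_on \<phi> (coset M ?K ` mcarrier M)"
    using \<phi>_coset coset_hom_kernel_eq_iff by (auto simp: inj_on_def)
  moreover have "\<phi> ` coset M ?K ` mcarrier M = mcarrier N"
    using \<phi>_coset surj by (simp add: image_image)
  ultimately show ?thesis unfolding iso_mod_def bij_betw_def by auto
qed

end

section \<open>Torsion classes\<close>

context
  fixes G :: "('a::ring_1, 'u) rmod \<Rightarrow> bool"
  assumes T: "torsion_class G"
begin

lemma torsion_class_rmodule: "G N \<Longrightarrow> rmodule N"
  using T unfolding torsion_class_def by blast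

lemma inG_of_G: "G N \<Longrightarrow> inG G N"
  unfolding inG_def using torsion_class_rmodule iso_mod_refl by blast

lemma G_of_inG: "inG G N \<Longrightarrow> G N"
  using T iso_mod_sym unfolding inG_def torsion_class_def by blast

lemma inG_iso: "inG G N \<Longrightarrow> rmodule P \<Longrightarrow> iso_mod P N \<Longrightarrow> inG G P"
  unfolding inG_def using iso_mod_trans by blast

lemma inG_surj_image:
  fixes N :: "('a, 'u) rmod"
  assumes N: "inG G N" and P: "rmodule P" and f: "hom_mod N P f"
    and surj: "f ` mcarrier N = mcarrier P"
  shows "inG G P"
proof -
  have RN: "rmodule N" using N unfolding inG_def by blast
  have K: "sub_mod N (hom_kernel N P f)" by (rule sub_mod_hom_kernel[OF RN P f])
  have "inG G (quot_mod N (hom_kernel N P f))"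
    using T G_of_inG[OF N] K unfolding torsion_class_def by blast
  moreover have "iso_mod P (quot_mod N (hom_kernel N P f))"
    using iso_mod_sym[OF rmodule_quot_mod[OF K] iso_mod_quot_hom_kernel[OF RN P f surj]] .
  ultimately show ?thesis using inG_iso P by blast
qed

lemma inG_extension:
  fixes Y :: "('a, 'u) rmod"
  assumes Y: "rmodule Y" and Z: "rmodule Z" and g: "hom_mod Y Z g"
    and surj: "g ` mcarrier Y = mcarrier Z"
    and K: "inG G (submod Y (hom_kernel Y Z g))" and GZ: "inG G Z"
  shows "inG G Y"
proof -
  let ?K = "hom_kernel Y Z g"
  obtain Z' \<psi> where Z': "G Z'" and \<psi>: "hom_mod Z Z' \<psi>" "bij_betw \<psi> (mcarrier Z) (mcarrier Z')"
    using GZ unfolding inG_def iso_mod_def by blast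
  have RZ': "rmodule Z'" by (rule torsion_class_rmodule[OF Z'])
  have \<psi>_zero_iff: "\<psi> z = mzero Z' \<longleftrightarrow> z = mzero Z" if "z \<in> mcarrier Z" for z
    using that \<psi>(2) hom_mod_zero[OF Z RZ' \<psi>(1)] rmodule_zero_closed[OF Z]
    by (metis bij_betw_def inj_on_def)
  have "short_exact (submod Y ?K) Y Z' id (\<psi> \<circ> g)"
    unfolding short_exact_def
  proof (intro conjI)
    show "hom_mod (submod Y ?K) Y id" unfolding hom_mod_def hom_kernel_def by auto
    show "hom_mod Y Z' (\<psi> \<circ> g)" by (rule hom_mod_comp[OF g \<psi>(1)])
    show "(\<psi> \<circ> g) ` mcarrier Y = mcarrier Z'"
      using surj \<psi>(2) unfolding bij_betw_def by (metis image_comp)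
    show "id ` mcarrier (submod Y ?K) = {y \<in> mcarrier Y. (\<psi> \<circ> g) y = mzero Z'}"
      using \<psi>_zero_iff hom_modD(1)[OF g] unfolding hom_kernel_def by auto
  qed simp
  then have "G Y"
    using T rmodule_submod[OF sub_mod_hom_kernel[OF Y Z g]] Y RZ' G_of_inG[OF K] Z'
    unfolding torsion_class_def by blast
  then show ?thesis by (rule inG_of_G)
qed

end

section \<open>Strict subobjects\<close>

lemma strict_subobjD:
  assumes "strict_subobj G N S"
  shows "sub_mod N S" "inG G (submod N S)" "\<And>S'. subobj G N S' \<Longrightarrow> inG G (submod N (S \<inter> S'))"
  using assms unfolding strict_subobj_def subobj_def by blast+

lemma strict_subobj_trans:
  assumes B: "sub_mod M B" and sB: "strict_subobj G M B" and sA: "strict_subobj G (submod M B) A"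
  shows "strict_subobj G M A"
proof -
  have A: "sub_mod M A" and AB: "A \<subseteq> B"
    using strict_subobjD(1)[OF sA] sub_mod_submod_iff[OF B] by blast+
  have "inG G (submod M (A \<inter> S'))" if S': "subobj G M S'" for S'
  proof -
    have "subobj G (submod M B) (B \<inter> S')"
      using strict_subobjD(3)[OF sB S'] sub_mod_Int[OF B] S' sub_mod_submod_iff[OF B]
      unfolding subobj_def by auto
    then have "inG G (submod M (A \<inter> (B \<inter> S')))" using strict_subobjD(3)[OF sA] by simp
    moreover have "A \<inter> (B \<inter> S') = A \<inter> S'" using AB by blast
    ultimately show ?thesis by simp
  qed
  then show ?thesis
    using A strict_subobjD(2)[OF sA] unfolding strict_subobj_def subobj_def by simp
qed

lemma strict_subobj_submod:
  assumes B: "sub_mod M B" and AB: "A \<subseteq> B" and sA: "strict_subobj G M A"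
  shows "strict_subobj G (submod M B) A"
  using strict_subobjD[OF sA] AB sub_mod_submod_iff[OF B]
  unfolding strict_subobj_def subobj_def by simp

context
  fixes G :: "('a::ring_1, 'u) rmod \<Rightarrow> bool"
  assumes T: "torsion_class G"
begin

lemma inG_submod_image:
  fixes M :: "('a, 'u) rmod"
  assumes M: "rmodule M" and N: "rmodule N" and f: "hom_mod M N f"
    and S: "sub_mod M S" and GS: "inG G (submod M S)"
  shows "inG G (submod N (f ` S))"
proof (rule inG_surj_image[OF T GS])
  show "rmodule (submod N (f ` S))" by (rule rmodule_submod[OF sub_mod_image[OF M N f S]])
  show "hom_mod (submod M S) (submod N (f ` S)) f"
    by (rule hom_mod_restrict[OF f sub_modD(2)[OF S] order_refl])
qed simp

lemma inG_submod_extension: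
  fixes M :: "('a, 'u) rmod"
  assumes A: "sub_mod M A" and S: "sub_mod M S"
    and GAS: "inG G (submod M (A \<inter> S))" and GQ: "inG G (submod (quot_mod M A) (coset M A ` S))"
  shows "inG G (submod M S)"
proof -
  have M: "rmodule M" by (rule sub_modD(1)[OF A])
  have Q: "rmodule (quot_mod M A)" by (rule rmodule_quot_mod[OF A])
  have \<pi>: "hom_mod M (quot_mod M A) (coset M A)" by (rule hom_mod_coset[OF A])
  have S_carrier: "S \<subseteq> mcarrier M" by (rule sub_modD(2)[OF S])
  have "hom_kernel (submod M S) (submod (quot_mod M A) (coset M A ` S)) (coset M A) = A \<inter> S"
    unfolding hom_kernel_def using coset_eq_zero_iff[OF A] S_carrier by auto
  then show ?thesis
    using inG_extension[OF T rmodule_submod[OF S] rmodule_submod[OF sub_mod_image[OF M Q \<pi> S]]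
        hom_mod_restrict[OF \<pi> S_carrier order_refl]] GAS GQ
    by simp
qed

lemma inG_coset_vimage:
  fixes M :: "('a, 'u) rmod"
  assumes A: "sub_mod M A" and GA: "inG G (submod M A)"
    and S': "sub_mod (quot_mod M A) S'" and GS': "inG G (submod (quot_mod M A) S')"
  shows "inG G (submod M {x \<in> mcarrier M. coset M A x \<in> S'})"
proof -
  let ?D = "{x \<in> mcarrier M. coset M A x \<in> S'}"
  have D: "sub_mod M ?D"
    by (rule sub_mod_vimage[OF sub_modD(1)[OF A] rmodule_quot_mod[OF A] hom_mod_coset[OF A] S'])
  have "A \<inter> ?D = A"
    using coset_eq_zero_iff[OF A] sub_modD(2)[OF A] sub_modD(3)[OF S'] by fastforce
  moreover have "coset M A ` ?D = S'" using coset_image_vimage[OF S'] .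
  ultimately show ?thesis using inG_submod_extension[OF A D] GA GS' by simp
qed

lemma strict_subobj_quot_image:
  fixes M :: "('a, 'u) rmod"
  assumes AB: "A \<subseteq> B" and sA: "strict_subobj G M A" and sB: "strict_subobj G M B"
  shows "strict_subobj G (quot_mod M A) (coset M A ` B)"
proof -
  have A: "sub_mod M A" and B: "sub_mod M B" using strict_subobjD(1) sA sB by blast+
  have M: "rmodule M" and Q: "rmodule (quot_mod M A)" and \<pi>: "hom_mod M (quot_mod M A) (coset M A)"
    using sub_modD(1)[OF A] rmodule_quot_mod[OF A] hom_mod_coset[OF A] .
  have "inG G (submod (quot_mod M A) (coset M A ` B \<inter> S'))"
    if S': "subobj G (quot_mod M A) S'" for S'
  proof -
    let ?D = "{x \<in> mcarrier M. coset M A x \<in> S'}"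
    have D: "sub_mod M ?D" using sub_mod_vimage[OF M Q \<pi>] S' unfolding subobj_def by blast
    have "inG G (submod M ?D)"
      using inG_coset_vimage[OF A strict_subobjD(2)[OF sA]] S' unfolding subobj_def by blast
    then have "inG G (submod M (B \<inter> ?D))"
      using strict_subobjD(3)[OF sB] D unfolding subobj_def by blast
    moreover have "coset M A ` B \<inter> S' = coset M A ` (B \<inter> ?D)"
      using coset_image_Int[OF A B AB, of ?D] coset_image_vimage[of M A S'] S'
      unfolding subobj_def by simp
    ultimately show ?thesis using inG_submod_image[OF M Q \<pi> sub_mod_Int[OF B D]] by simp
  qed
  then show ?thesis
    using sub_mod_image[OF M Q \<pi> B] inG_submod_image[OF M Q \<pi> B strict_subobjD(2)[OF sB]]
    unfolding strict_subobj_def subobj_def by blast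
qed

lemma strict_subobj_of_quot_image:
  fixes M :: "('a, 'u) rmod"
  assumes B: "sub_mod M B" and AB: "A \<subseteq> B" and sA: "strict_subobj G M A"
    and sQ: "strict_subobj G (quot_mod M A) (coset M A ` B)"
  shows "strict_subobj G M B"
proof -
  have A: "sub_mod M A" by (rule strict_subobjD(1)[OF sA])
  have M: "rmodule M" and Q: "rmodule (quot_mod M A)" and \<pi>: "hom_mod M (quot_mod M A) (coset M A)"
    using sub_modD(1)[OF A] rmodule_quot_mod[OF A] hom_mod_coset[OF A] .
  have "inG G (submod M (B \<inter> S'))" if S': "subobj G M S'" for S'
  proof (rule inG_submod_extension[OF A sub_mod_Int[OF B]])
    show "sub_mod M S'" using S' unfolding subobj_def by blast
    have "A \<inter> (B \<inter> S') = A \<inter> S'" using AB by blast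
    then show "inG G (submod M (A \<inter> (B \<inter> S')))" using strict_subobjD(3)[OF sA S'] by simp
    have "subobj G (quot_mod M A) (coset M A ` S')"
      using S' sub_mod_image[OF M Q \<pi>] inG_submod_image[OF M Q \<pi>] unfolding subobj_def by blast
    then show "inG G (submod (quot_mod M A) (coset M A ` (B \<inter> S')))"
      using strict_subobjD(3)[OF sQ] coset_image_Int[OF A B AB] S' sub_modD(2)
      unfolding subobj_def by metis
  qed
  moreover have "inG G (submod M B)"
    using inG_submod_extension[OF A B] strict_subobjD(2)[OF sA] strict_subobjD(2)[OF sQ] AB
    by (simp add: Int_absorb2)
  ultimately show ?thesis using B unfolding strict_subobj_def subobj_def by blast
qed

end

theorem mainTheorem5:
  fixes of_k :: "'k::field \<Rightarrow> 'a::ring_1"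
    and G :: "('a, 'u) rmod \<Rightarrow> bool"
    and M :: "('a, 'u) rmod"
    and A B :: "'u set"
  assumes "fd_algebra of_k"
    and "torsion_class G"
    and "G M"
    and "sub_mod M A" and "sub_mod M B" and "A \<subseteq> B"
  shows "((strict_subobj G M B \<and> strict_subobj G (submod M B) A)
            \<longleftrightarrow> (strict_subobj G M A \<and> strict_subobj G (quot_mod M A) (coset M A ` B)))
       \<and> ((strict_subobj G M A \<and> strict_subobj G (quot_mod M A) (coset M A ` B))
            \<longleftrightarrow> (strict_subobj G M A \<and> strict_subobj G M B))"
proof -
  note T = \<open>torsion_class G\<close> and B = \<open>sub_mod M B\<close> and AB = \<open>A \<subseteq> B\<close>
  have a_iff_c: "strict_subobj G M B \<and> strict_subobj G (submod M B) A \<longleftrightarrow>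
      strict_subobj G M A \<and> strict_subobj G M B"
    using strict_subobj_trans[OF B] strict_subobj_submod[OF B AB] by blast
  have b_iff_c: "strict_subobj G M A \<and> strict_subobj G (quot_mod M A) (coset M A ` B) \<longleftrightarrow>
      strict_subobj G M A \<and> strict_subobj G M B"
    using strict_subobj_quot_image[OF T AB] strict_subobj_of_quot_image[OF T B AB] by blast
  show ?thesis using a_iff_c b_iff_c by blast
qed

end
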